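(* Let $G=(A,B;E)$ be a bipartite graph with bipartition $\{A,B\}$, let $\bar G$ be its complement, and let $T,T'$ be $(p,p)$-bicliques of $G$. There is a TJ-move from $T$ to $T'$ in $G$ (i.e., $|T\setminus T'|=|T'\setminus T|=1$) if and only if there is a CS1-move from $T$ to $T'$ in $\bar G$.
   Context: A vertex set $S$ is a $(p,q)$-biclique of $G$ if $G[S]$ is isomorphic to $K_{p,q}$. For a graph $F$ and $S\subseteq V(F)$, $\mathsf{cc}_F(S)$ is the set of vertex sets of connected components of $F[S]$. A CS1-move from $T$ to $T'$ in $\bar G$ (where $T,T'$ have the same multiset of component sizes) means: $|\mathsf{cc}_{\bar G}(T)\setminus\mathsf{cc}_{\bar G}(T')|=|\mathsf{cc}_{\bar G}(T')\setminus\mathsf{cc}_{\bar G}(T)|=1$, and the unique elements $X\in\mathsf{cc}_{\bar G}(T)\setminus\mathsf{cc}_{\bar G}(T')$ and $X'\in\mathsf{cc}_{\bar G}(T')\setminus\mathsf{cc}_{\bar G}(T)$ satisfy that $\bar G[X\cup X']$ is connected and $|X\setminus X'|=|X'\setminus X|=1$. The complement $\bar G$ has the same vertex set, with two distinct vertices adjacent iff they are non-adjacent in $G$. *)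

theory Defs
  imports Main "HOL-Library.Multiset"
begin

definition simple_graph :: "'a set \<Rightarrow> ('a \<Rightarrow> 'a \<Rightarrow> bool) \<Rightarrow> bool" where
  "simple_graph V E \<longleftrightarrow> finite V \<and>
     (\<forall>x y. E x y \<longrightarrow> x \<in> V \<and> y \<in> V \<and> x \<noteq> y \<and> E y x)"

definition bipartite_graph :: "'a set \<Rightarrow> 'a set \<Rightarrow> 'a set \<Rightarrow> ('a \<Rightarrow> 'a \<Rightarrow> bool) \<Rightarrow> bool" where
  "bipartite_graph V A B E \<longleftrightarrow> simple_graph V E \<and> A \<union> B = V \<and> A \<inter> B = {} \<and>
     (\<forall>x\<in>A. \<forall>y\<in>A. \<not> E x y) \<and> (\<forall>x\<in>B. \<forall>y\<in>B. \<not> E x y)"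

definition complement :: "'a set \<Rightarrow> ('a \<Rightarrow> 'a \<Rightarrow> bool) \<Rightarrow> 'a \<Rightarrow> 'a \<Rightarrow> bool" where
  "complement V E x y \<longleftrightarrow> x \<in> V \<and> y \<in> V \<and> x \<noteq> y \<and> \<not> E x y"

definition is_biclique :: "'a set \<Rightarrow> ('a \<Rightarrow> 'a \<Rightarrow> bool) \<Rightarrow> nat \<Rightarrow> nat \<Rightarrow> 'a set \<Rightarrow> bool" where
  "is_biclique V E p q S \<longleftrightarrow> S \<subseteq> V \<and>
     (\<exists>X Y. X \<inter> Y = {} \<and> X \<union> Y = S \<and> finite X \<and> finite Y \<and> card X = p \<and> card Y = q \<and>
        (\<forall>x\<in>S. \<forall>y\<in>S. E x y \<longleftrightarrow> (x \<in> X \<and> y \<in> Y) \<or> (x \<in> Y \<and> y \<in> X)))"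

definition reach_in :: "('a \<Rightarrow> 'a \<Rightarrow> bool) \<Rightarrow> 'a set \<Rightarrow> 'a \<Rightarrow> 'a \<Rightarrow> bool" where
  "reach_in F S = (\<lambda>x y. x \<in> S \<and> y \<in> S \<and> F x y)\<^sup>*\<^sup>*"

definition connected_in :: "('a \<Rightarrow> 'a \<Rightarrow> bool) \<Rightarrow> 'a set \<Rightarrow> bool" where
  "connected_in F S \<longleftrightarrow> S \<noteq> {} \<and> (\<forall>x\<in>S. \<forall>y\<in>S. reach_in F S x y)"

definition cc :: "('a \<Rightarrow> 'a \<Rightarrow> bool) \<Rightarrow> 'a set \<Rightarrow> 'a set set" where
  "cc F S = {{y \<in> S. reach_in F S x y} | x. x \<in> S}"

definition cc_sizes :: "('a \<Rightarrow> 'a \<Rightarrow> bool) \<Rightarrow> 'a set \<Rightarrow> nat multiset" where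
  "cc_sizes F S = image_mset card (mset_set (cc F S))"

definition TJ_move :: "'a set \<Rightarrow> 'a set \<Rightarrow> bool" where
  "TJ_move T T' \<longleftrightarrow> card (T - T') = 1 \<and> card (T' - T) = 1"

text \<open>CS1-move from T to T' in F (including the standing requirement that T and T'
have the same multiset of component sizes).\<close>
definition CS1_move :: "('a \<Rightarrow> 'a \<Rightarrow> bool) \<Rightarrow> 'a set \<Rightarrow> 'a set \<Rightarrow> bool" where
  "CS1_move F T T' \<longleftrightarrow> cc_sizes F T = cc_sizes F T' \<and>
     card (cc F T - cc F T') = 1 \<and> card (cc F T' - cc F T) = 1 \<and>
     (\<forall>X X'. cc F T - cc F T' = {X} \<and> cc F T' - cc F T = {X'} \<longrightarrow>
        connected_in F (X \<union> X') \<and> card (X - X') = 1 \<and> card (X' - X) = 1)"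

end

(* In the complement of a bipartite graph, a (p,p)-biclique with sides X and Y induces
   exactly two components, the cliques X and Y. A token jump that keeps a biclique
   must keep the independent side Y and replace one vertex u of X by some v; then v,
   like u, is adjacent to all of Y, hence lies on the same side of the bipartition as u,
   so u and v are adjacent in the complement and X, X - u + v form a connected union.
   Conversely, for any symmetric relation, exchanging a single component Z for Z'
   changes the vertex set exactly by Z - Z' and Z' - Z. *)
theory Submission
  imports Defs
begin

lemma reach_in_step: "a \<in> S \<Longrightarrow> b \<in> S \<Longrightarrow> F a b \<Longrightarrow> reach_in F S a b"
  unfolding reach_in_def by (simp add: r_into_rtranclp)

lemma reach_in_trans: "reach_in F S a b \<Longrightarrow> reach_in F S b c \<Longrightarrow> reach_in F S a c"
  unfolding reach_in_def by simp

lemma reach_in_mono: "S \<subseteq> S' \<Longrightarrow> reach_in F S x y \<Longrightarrow> reach_in F S' x y"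
  unfolding reach_in_def by (rule mono_rtranclp[rule_format]) auto

lemma reach_in_sym:
  assumes "symp F" "reach_in F S x y"
  shows "reach_in F S y x"
proof -
  have "symp (\<lambda>x y. x \<in> S \<and> y \<in> S \<and> F x y)"
    using assms(1) by (auto simp: symp_def)
  then show ?thesis
    using assms(2) unfolding reach_in_def by (rule sympD[OF symp_rtranclp])
qed

lemma reach_in_closed:
  assumes "reach_in F S x y" "x \<in> K" "\<And>a b. a \<in> K \<Longrightarrow> b \<in> S \<Longrightarrow> F a b \<Longrightarrow> b \<in> K"
  shows "y \<in> K"
  using assms(1) unfolding reach_in_def
  by (induction rule: rtranclp_induct) (use assms in auto)

lemma cc_subset: "C \<in> cc F S \<Longrightarrow> C \<subseteq> S"
  unfolding cc_def by auto

lemma cc_cover: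
  assumes "x \<in> S"
  obtains C where "C \<in> cc F S" "x \<in> C"
  using assms unfolding cc_def reach_in_def by auto

lemma cc_eq_if_common:
  assumes "symp F" "C \<in> cc F S" "D \<in> cc F S" "z \<in> C" "z \<in> D"
  shows "C = D"
proof -
  obtain c d where C: "C = {y \<in> S. reach_in F S c y}" and D: "D = {y \<in> S. reach_in F S d y}"
    using assms(2,3) unfolding cc_def by blast
  have "reach_in F S c z" "reach_in F S d z" using assms(4,5) unfolding C D by blast+
  then have cd: "reach_in F S c d" and dc: "reach_in F S d c"
    using reach_in_sym[OF assms(1)] reach_in_trans by metis+
  show ?thesis
    unfolding C D using reach_in_trans[OF cd] reach_in_trans[OF dc] by blast
qed

lemma cc_diff_eq:
  assumes "symp F" and Z: "cc F T - cc F T' = {Z}" and Z': "cc F T' - cc F T = {Z'}"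
  shows "T - T' = Z - Z'"
proof
  show "T - T' \<subseteq> Z - Z'"
  proof
    fix x assume x: "x \<in> T - T'"
    then obtain C where C: "C \<in> cc F T" "x \<in> C" by (auto elim: cc_cover)
    then have "C \<notin> cc F T'" using x cc_subset by blast
    then have "C = Z" using C Z by blast
    moreover have "x \<notin> Z'" using x Z' cc_subset by blast
    ultimately show "x \<in> Z - Z'" using C by blast
  qed
  show "Z - Z' \<subseteq> T - T'"
  proof
    fix x assume x: "x \<in> Z - Z'"
    have "Z \<in> cc F T" "Z \<notin> cc F T'" using Z by auto
    moreover have "x \<notin> T'"
    proof
      assume "x \<in> T'"
      then obtain C' where C': "C' \<in> cc F T'" "x \<in> C'" by (auto elim: cc_cover)
      then have "C' \<in> cc F T" using x Z' by blast
      then have "C' = Z" using cc_eq_if_common[OF assms(1)] C' x \<open>Z \<in> cc F T\<close> by blast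
      then show False using C' \<open>Z \<notin> cc F T'\<close> by blast
    qed
    ultimately show "x \<in> T - T'" using x cc_subset by blast
  qed
qed

lemma CS1_move_imp_TJ_move:
  assumes "symp F" "CS1_move F T T'"
  shows "TJ_move T T'"
proof -
  obtain Z Z' where Z: "cc F T - cc F T' = {Z}" and Z': "cc F T' - cc F T = {Z'}"
    using assms(2) unfolding CS1_move_def by (meson card_1_singletonE)
  then have "card (Z - Z') = 1" "card (Z' - Z) = 1"
    using assms(2) unfolding CS1_move_def by blast+
  moreover have "T - T' = Z - Z'" "T' - T = Z' - Z"
    using cc_diff_eq[OF assms(1)] Z Z' by blast+
  ultimately show ?thesis unfolding TJ_move_def by simp
qed

lemma connected_in_clique:
  assumes "S \<noteq> {}" "\<And>a b. a \<in> S \<Longrightarrow> b \<in> S \<Longrightarrow> a \<noteq> b \<Longrightarrow> F a b"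
  shows "connected_in F S"
proof -
  have "reach_in F S x y" if "x \<in> S" "y \<in> S" for x y
    using that assms(2) reach_in_step[of x S y F] unfolding reach_in_def by (cases "x = y") auto
  then show ?thesis unfolding connected_in_def using assms(1) by blast
qed

lemma connected_in_Un_edge:
  assumes "symp F" "connected_in F S" "connected_in F S'" "a \<in> S" "b \<in> S'" "F a b"
  shows "connected_in F (S \<union> S')"
proof -
  let ?R = "reach_in F (S \<union> S')"
  have from_a: "?R a x" if "x \<in> S \<union> S'" for x
  proof (cases "x \<in> S")
    case True
    then have "reach_in F S a x" using assms(2,4) unfolding connected_in_def by blast
    then show ?thesis by (rule reach_in_mono[OF Un_upper1])
  next
    case False
    then have "reach_in F S' b x" using that assms(3,5) unfolding connected_in_def by blast
    then have "?R b x" by (rule reach_in_mono[OF Un_upper2])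
    moreover have "?R a b" using assms(4-6) by (intro reach_in_step) auto
    ultimately show ?thesis by (rule reach_in_trans[rotated])
  qed
  have "?R x y" if "x \<in> S \<union> S'" "y \<in> S \<union> S'" for x y
    using reach_in_sym[OF assms(1) from_a[OF that(1)]] from_a[OF that(2)] by (rule reach_in_trans)
  then show ?thesis unfolding connected_in_def using assms(4) by auto
qed

lemma cc_Un_separated:
  assumes "connected_in F X" "connected_in F Y"
    and no_edge: "\<And>a b. a \<in> X \<Longrightarrow> b \<in> Y \<Longrightarrow> \<not> F a b \<and> \<not> F b a"
  shows "cc F (X \<union> Y) = {X, Y}"
proof -
  let ?comp = "\<lambda>x. {y \<in> X \<union> Y. reach_in F (X \<union> Y) x y}"
  have component: "?comp x = K" if "connected_in F K" "x \<in> K" "K = X \<or> K = Y" for K x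
  proof
    have closed: "b \<in> K" if "a \<in> K" "b \<in> X \<union> Y" "F a b" for a b
      using \<open>K = X \<or> K = Y\<close> that no_edge by blast
    show "?comp x \<subseteq> K"
    proof
      fix y assume "y \<in> ?comp x"
      then have "reach_in F (X \<union> Y) x y" by blast
      then show "y \<in> K" using \<open>x \<in> K\<close> closed by (rule reach_in_closed)
    qed
    have "reach_in F K x y" if "y \<in> K" for y
      using \<open>connected_in F K\<close> \<open>x \<in> K\<close> that unfolding connected_in_def by blast
    then show "K \<subseteq> ?comp x"
      using \<open>K = X \<or> K = Y\<close> reach_in_mono[of K "X \<union> Y"] by blast
  qed
  obtain x y where "x \<in> X" "y \<in> Y" using assms(1,2) unfolding connected_in_def by blast
  have "cc F (X \<union> Y) = ?comp ` (X \<union> Y)" unfolding cc_def by blast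
  also have "\<dots> = {X, Y}"
  proof
    show "?comp ` (X \<union> Y) \<subseteq> {X, Y}" using component assms(1,2) by blast
    show "{X, Y} \<subseteq> ?comp ` (X \<union> Y)"
      using component[OF assms(1) \<open>x \<in> X\<close>] component[OF assms(2) \<open>y \<in> Y\<close>] \<open>x \<in> X\<close> \<open>y \<in> Y\<close>
      by blast
  qed
  finally show ?thesis .
qed

definition biclique_sides :: "('a \<Rightarrow> 'a \<Rightarrow> bool) \<Rightarrow> 'a set \<Rightarrow> 'a set \<Rightarrow> bool" where
  "biclique_sides E X Y \<longleftrightarrow> X \<inter> Y = {} \<and> finite X \<and> finite Y \<and>
     (\<forall>x\<in>X \<union> Y. \<forall>y\<in>X \<union> Y. E x y \<longleftrightarrow> (x \<in> X \<and> y \<in> Y) \<or> (x \<in> Y \<and> y \<in> X))"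

lemma is_biclique_iff_sides:
  "is_biclique V E p q S \<longleftrightarrow>
     S \<subseteq> V \<and> (\<exists>X Y. biclique_sides E X Y \<and> X \<union> Y = S \<and> card X = p \<and> card Y = q)"
  unfolding is_biclique_def biclique_sides_def by blast

lemma biclique_sides_commute: "biclique_sides E X Y \<longleftrightarrow> biclique_sides E Y X"
  unfolding biclique_sides_def by blast

lemma is_biclique_sides_containing:
  assumes "is_biclique V E p p S" "u \<in> S"
  obtains X Y where "biclique_sides E X Y" "X \<union> Y = S" "card X = p" "card Y = p" "u \<in> X"
  using assms biclique_sides_commute unfolding is_biclique_iff_sides by blast

lemma biclique_sides_edge: "biclique_sides E X Y \<Longrightarrow> a \<in> X \<Longrightarrow> b \<in> Y \<Longrightarrow> E a b"
  unfolding biclique_sides_def by blast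

lemma biclique_sides_no_edge: "biclique_sides E X Y \<Longrightarrow> a \<in> X \<Longrightarrow> b \<in> X \<Longrightarrow> \<not> E a b"
  unfolding biclique_sides_def by blast

lemma biclique_shares_side:
  assumes "is_biclique V E p p T'" "biclique_sides E X Y" "Y \<subseteq> T'" "card Y = p"
  obtains X' where "biclique_sides E X' Y" "X' \<union> Y = T'" "card X' = p"
proof -
  obtain X'' Y'' where T': "biclique_sides E X'' Y''" "X'' \<union> Y'' = T'" "card X'' = p" "card Y'' = p"
    using assms(1) unfolding is_biclique_iff_sides by blast
  have "Y \<subseteq> X'' \<or> Y \<subseteq> Y''"
  proof (rule ccontr)
    assume "\<not> (Y \<subseteq> X'' \<or> Y \<subseteq> Y'')"
    then obtain a b where ab: "a \<in> Y" "b \<in> Y" "a \<in> X''" "b \<in> Y''"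
      using assms(3) T'(2) by blast
    have "biclique_sides E Y X" using assms(2) biclique_sides_commute by blast
    then have "\<not> E a b" using ab(1,2) by (rule biclique_sides_no_edge)
    moreover have "E a b" using T'(1) ab(3,4) by (rule biclique_sides_edge)
    ultimately show False by contradiction
  qed
  moreover have "finite X''" "finite Y''" using T'(1) unfolding biclique_sides_def by auto
  ultimately have "Y = X'' \<or> Y = Y''"
    using card_subset_eq T'(3,4) assms(4) by metis
  then show thesis
  proof
    assume "Y = X''"
    then show thesis using that[of Y''] T' biclique_sides_commute[of E Y'' X''] by (simp add: sup_commute)
  next
    assume "Y = Y''"
    then show thesis using that[of X''] T' by simp
  qed
qed

lemma complement_side_clique:
  "biclique_sides E X Y \<Longrightarrow> X \<subseteq> V \<Longrightarrow> a \<in> X \<Longrightarrow> b \<in> X \<Longrightarrow> a \<noteq> b \<Longrightarrow> complement V E a b"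
  using biclique_sides_no_edge[of E X Y a b] unfolding complement_def by blast

lemma cc_complement_biclique:
  assumes "biclique_sides E X Y" "X \<union> Y \<subseteq> V" "X \<noteq> {}" "Y \<noteq> {}"
  shows "cc (complement V E) (X \<union> Y) = {X, Y}"
proof (rule cc_Un_separated)
  show "connected_in (complement V E) X" "connected_in (complement V E) Y"
    using assms complement_side_clique biclique_sides_commute
    by (metis connected_in_clique le_sup_iff)+
  show "\<not> complement V E a b \<and> \<not> complement V E b a" if "a \<in> X" "b \<in> Y" for a b
    using assms(1) that unfolding complement_def biclique_sides_def by blast
qed

lemma symp_complement: "simple_graph V E \<Longrightarrow> symp (complement V E)"
  unfolding simple_graph_def complement_def symp_def by blast

lemma bipartite_common_neighbour:
  assumes "bipartite_graph V A B E" "E u y" "E v y"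
  shows "\<not> E u v"
proof -
  have sg: "simple_graph V E" and AB: "A \<union> B = V"
    and inA: "\<forall>x\<in>A. \<forall>y\<in>A. \<not> E x y" and inB: "\<forall>x\<in>B. \<forall>y\<in>B. \<not> E x y"
    using assms(1) unfolding bipartite_graph_def by auto
  have "u \<in> A \<union> B" "v \<in> A \<union> B" "y \<in> A \<union> B"
    using sg assms(2,3) AB unfolding simple_graph_def by blast+
  then show ?thesis using inA inB assms(2,3) by blast
qed

lemma TJ_move_biclique_exchange:
  assumes "is_biclique V E p p T" "is_biclique V E p p T'" "TJ_move T T'"
  obtains X X' Y u v where "biclique_sides E X Y" "biclique_sides E X' Y"
    "X \<union> Y = T" "X' \<union> Y = T'" "card X' = card X" "X - X' = {u}" "X' - X = {v}" "Y \<noteq> {}"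
proof -
  obtain u v where u: "T - T' = {u}" and v: "T' - T = {v}"
    using assms(3) unfolding TJ_move_def by (meson card_1_singletonE)
  have "u \<in> T" using u by blast
  then obtain X Y where XY: "biclique_sides E X Y" "X \<union> Y = T" "card X = p" "card Y = p" "u \<in> X"
    by (rule is_biclique_sides_containing[OF assms(1)])
  have disj: "X \<inter> Y = {}" using XY(1) unfolding biclique_sides_def by blast
  then have "Y \<subseteq> T'" using XY(2,5) u by blast
  then obtain X' where X'Y: "biclique_sides E X' Y" "X' \<union> Y = T'" "card X' = p"
    using XY(4) by (rule biclique_shares_side[OF assms(2) XY(1)])
  have disj': "X' \<inter> Y = {}" using X'Y(1) unfolding biclique_sides_def by blast
  have "X - X' = {u}" "X' - X = {v}"
    using XY(2) X'Y(2) disj disj' u v by blast+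
  moreover have "finite X" using XY(1) unfolding biclique_sides_def by blast
  then have "Y \<noteq> {}" using XY(3-5) by (auto simp: card_gt_0_iff)
  ultimately show thesis
    using that[OF XY(1) X'Y(1) XY(2) X'Y(2)] XY(3) X'Y(3) by simp
qed

lemma TJ_move_imp_CS1_move:
  assumes bip: "bipartite_graph V A B E"
    and "is_biclique V E p p T" "is_biclique V E p p T'" "TJ_move T T'"
  shows "CS1_move (complement V E) T T'"
proof -
  let ?C = "complement V E"
  obtain X X' Y u v where sides: "biclique_sides E X Y" "biclique_sides E X' Y"
    and T: "X \<union> Y = T" "X' \<union> Y = T'" and "card X' = card X"
    and exchange: "X - X' = {u}" "X' - X = {v}" and "Y \<noteq> {}"
    by (rule TJ_move_biclique_exchange[OF assms(2-4)])
  have TV: "T \<subseteq> V" "T' \<subseteq> V" using assms(2,3) unfolding is_biclique_def by auto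
  have "u \<in> X" "v \<in> X'" using exchange by blast+
  have "X \<union> Y \<subseteq> V" "X' \<union> Y \<subseteq> V" "X \<noteq> {}" "X' \<noteq> {}"
    using T TV \<open>u \<in> X\<close> \<open>v \<in> X'\<close> by auto
  then have ccT: "cc ?C T = {X, Y}" and ccT': "cc ?C T' = {X', Y}"
    using cc_complement_biclique[OF sides(1) _ _ \<open>Y \<noteq> {}\<close>]
      cc_complement_biclique[OF sides(2) _ _ \<open>Y \<noteq> {}\<close>] T by simp_all
  have "X \<inter> Y = {}" "X' \<inter> Y = {}" using sides unfolding biclique_sides_def by auto
  then have distinct: "X \<noteq> Y" "X' \<noteq> Y" "X \<noteq> X'"
    using \<open>u \<in> X\<close> \<open>v \<in> X'\<close> exchange by blast+
  obtain y where "y \<in> Y" using \<open>Y \<noteq> {}\<close> by blast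
  have "E u y" using sides(1) \<open>u \<in> X\<close> \<open>y \<in> Y\<close> by (rule biclique_sides_edge)
  moreover have "E v y" using sides(2) \<open>v \<in> X'\<close> \<open>y \<in> Y\<close> by (rule biclique_sides_edge)
  ultimately have "\<not> E u v" by (rule bipartite_common_neighbour[OF bip])
  moreover have "u \<in> V" "v \<in> V" "u \<noteq> v" using T TV exchange by blast+
  ultimately have uv: "?C u v" unfolding complement_def by blast
  have "symp ?C" using bip symp_complement unfolding bipartite_graph_def by blast
  moreover have "connected_in ?C X"
    using \<open>u \<in> X\<close> complement_side_clique[OF sides(1)] T(1) TV(1) by (intro connected_in_clique) auto
  moreover have "connected_in ?C X'"
    using \<open>v \<in> X'\<close> complement_side_clique[OF sides(2)] T(2) TV(2) by (intro connected_in_clique) auto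
  ultimately have "connected_in ?C (X \<union> X')"
    using \<open>u \<in> X\<close> \<open>v \<in> X'\<close> uv by (rule connected_in_Un_edge)
  moreover have "cc_sizes ?C T = cc_sizes ?C T'"
    unfolding cc_sizes_def ccT ccT' using distinct \<open>card X' = card X\<close> by simp
  moreover have "cc ?C T - cc ?C T' = {X}" "cc ?C T' - cc ?C T = {X'}"
    unfolding ccT ccT' using distinct by auto
  ultimately show ?thesis
    unfolding CS1_move_def using exchange by simp
qed

theorem lemma6:
  fixes V A B :: "'a set" and E :: "'a \<Rightarrow> 'a \<Rightarrow> bool" and p :: nat and T T' :: "'a set"
  assumes "bipartite_graph V A B E"
    and "is_biclique V E p p T"
    and "is_biclique V E p p T'"
  shows "TJ_move T T' \<longleftrightarrow> CS1_move (complement V E) T T'"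
proof
  show "TJ_move T T' \<Longrightarrow> CS1_move (complement V E) T T'"
    using TJ_move_imp_CS1_move assms by blast
  have "symp (complement V E)"
    using assms(1) symp_complement unfolding bipartite_graph_def by blast
  then show "CS1_move (complement V E) T T' \<Longrightarrow> TJ_move T T'"
    using CS1_move_imp_TJ_move by blast
qed

end
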